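(* Let $1\le r\le D$, $Y\in\mathbb{Z}$, and $1\le d<D$. Let $c_{1:d}$ be such that $P_\theta(\mathbf{C}_{1:d}=c_{1:d},Z^{(r,D)}=Y)>0$, and let $N^{<}_d,N^{=}_d,N^{>}_d$ be the numbers of $t\le d$ with $c_t={<}Y$, ${=}Y$, ${>}Y$ respectively. Suppose one of the following three conditions holds: (1) $N^{=}_d\ge1$ and $N^{<}_d=r-1$; (2) $N^{=}_d\ge1$ and $N^{>}_d=D-r$; (3) $N^{=}_d=\max\big(r-N^{<}_d,\;D-r-N^{>}_d+1\big)$. Then, conditionally on $\mathbf{C}_{1:d}=c_{1:d}$ and $Z^{(r,D)}=Y$, the variables $Z_1,\dots,Z_D$ are mutually independent. For $t\le d$, $Z_t\sim\operatorname{trunc}_{\mathbb{Z}_{c_t}}f_\theta$. The variables $Z_{d+1},\dots,Z_D$ are i.i.d. with law: - $\operatorname{trunc}_{[Y,\infty)}f_\theta$ under condition (1); - $\operatorname{trunc}_{(-\infty,Y]}f_\theta$ under condition (2); - $f_\theta$ under condition (3). In particular, $Z_{d+1},\dots,Z_D$ do not depend on $Z^{(r,D)}$ beyond $\mathbf{C}_{1:d}$.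
   Context: Let $f_\theta$ be a probability mass function on $\mathbb{Z}$. Let $Z_1,\dots,Z_D\overset{iid}{\sim}f_\theta$, and let $Z^{(r,D)}$ be the $r$-th smallest of them. For each $t$, $C_t\in\{{<}Y,{=}Y,{>}Y\}$ records whether $Z_t<Y$, $Z_t=Y$ or $Z_t>Y$. Set $\mathbb{Z}_{<Y}=\{\dots,Y-1\}$, $\mathbb{Z}_{=Y}=\{Y\}$ and $\mathbb{Z}_{>Y}=\{Y+1,\dots\}$. For $S\subseteq\mathbb{Z}$, $\operatorname{trunc}_S f$ denotes $f$ restricted to $S\cap\operatorname{supp}(f)$ and renormalized. *)

theory Defs
  imports "HOL-Probability.Probability"
begin

datatype cmp = LtY | EqY | GtY

definition cmp_of :: "int \<Rightarrow> int \<Rightarrow> cmp" where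
  "cmp_of Y z = (if z < Y then LtY else if z = Y then EqY else GtY)"

definition cmp_set :: "int \<Rightarrow> cmp \<Rightarrow> int set" where
  "cmp_set Y c = (case c of LtY \<Rightarrow> {..<Y} | EqY \<Rightarrow> {Y} | GtY \<Rightarrow> {Y<..})"

definition trunc_pmf :: "int set \<Rightarrow> int pmf \<Rightarrow> int pmf" where
  "trunc_pmf S f = cond_pmf f S"

text \<open>Joint law of Z_1,...,Z_D iid f, as a random function on indices 1..D
  (value 0 outside {1..D}).\<close>
definition iid_pmf :: "nat \<Rightarrow> int pmf \<Rightarrow> (nat \<Rightarrow> int) pmf" where
  "iid_pmf D f = Pi_pmf {1..D} 0 (\<lambda>_. f)"

definition order_stat :: "nat \<Rightarrow> nat \<Rightarrow> (nat \<Rightarrow> int) \<Rightarrow> int" where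
  "order_stat r D z = sort (map z [1..<D+1]) ! (r - 1)"

definition cond_event :: "nat \<Rightarrow> nat \<Rightarrow> int \<Rightarrow> nat \<Rightarrow> (nat \<Rightarrow> cmp) \<Rightarrow> (nat \<Rightarrow> int) set" where
  "cond_event r D Y d c =
     {z. (\<forall>t\<in>{1..d}. cmp_of Y (z t) = c t) \<and> order_stat r D z = Y}"

definition count_cmp :: "nat \<Rightarrow> (nat \<Rightarrow> cmp) \<Rightarrow> cmp \<Rightarrow> nat" where
  "count_cmp d c k = card {t\<in>{1..d}. c t = k}"

end

theory Submission
  imports Defs
begin

text \<open>
  The r-th order statistic equals Y exactly when fewer than r of the Z_t lie below Y and at most
  D - r lie above Y. On the event C_{1:d} = c_{1:d} the first d variables contribute exactly
  N^<_d and N^>_d to these two counts, and each of the three conditions leaves a constraint on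
  Z_{d+1}, ..., Z_D that acts on every coordinate separately: none of them lies below Y, none lies
  above Y, or no constraint at all. So the conditioning event is a product set, and conditioning
  a product distribution on a product set conditions each factor on its own side.
\<close>

lemma cond_Pi_pmf_Pi:
  assumes fin: "finite I" and pos: "measure_pmf.prob (Pi_pmf I dflt p) (Pi I A) \<noteq> 0"
  shows "cond_pmf (Pi_pmf I dflt p) (Pi I A) = Pi_pmf I dflt (\<lambda>t. cond_pmf (p t) (A t))"
proof -
  have support: "set_pmf (Pi_pmf I dflt p) \<inter> Pi I A \<noteq> {}"
    using pos by (simp add: measure_pmf_zero_iff)
  have factor_support: "set_pmf (p t) \<inter> A t \<noteq> {}" if "t \<in> I" for t
    using pos that fin by (simp add: measure_Pi_pmf_Pi measure_pmf_zero_iff)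
  show ?thesis
  proof (rule pmf_eqI)
    fix x
    show "pmf (cond_pmf (Pi_pmf I dflt p) (Pi I A)) x =
        pmf (Pi_pmf I dflt (\<lambda>t. cond_pmf (p t) (A t))) x"
    proof (cases "x \<in> Pi I A")
      case True
      then have "(\<Prod>t\<in>I. pmf (cond_pmf (p t) (A t)) (x t))
          = (\<Prod>t\<in>I. pmf (p t) (x t) / measure_pmf.prob (p t) (A t))"
        by (intro prod.cong) (auto simp: pmf_cond[OF factor_support])
      also have "\<dots> = (\<Prod>t\<in>I. pmf (p t) (x t)) / (\<Prod>t\<in>I. measure_pmf.prob (p t) (A t))"
        by (rule prod_dividef)
      finally show ?thesis
        using True by (simp add: pmf_cond[OF support] pmf_Pi[OF fin] measure_Pi_pmf_Pi[OF fin]; blast)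
    next
      case False
      then obtain t where "t \<in> I" "x t \<notin> A t" by auto
      then have "(\<Prod>t\<in>I. pmf (cond_pmf (p t) (A t)) (x t)) = 0"
        using fin by (intro prod_zero) (auto simp: pmf_cond[OF factor_support])
      with False show ?thesis
        by (simp add: pmf_cond[OF support] pmf_Pi[OF fin])
    qed
  qed
qed

lemma sorted_nth_iff_less_length_filter:
  assumes sorted: "sorted xs" and k: "k < length xs" and down: "\<And>x y. P y \<Longrightarrow> x \<le> y \<Longrightarrow> P x"
  shows "P (xs ! k) \<longleftrightarrow> k < length (filter P xs)"
proof -
  let ?S = "{i. i < length xs \<and> P (xs ! i)}"
  have "P (xs ! k) \<longleftrightarrow> k < card ?S"
  proof
    assume "P (xs ! k)"
    then have "P (xs ! i)" if "i \<le> k" for i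
      using down sorted_nth_mono[OF sorted that k] by blast
    then have "{..k} \<subseteq> ?S"
      using k by auto
    then show "k < card ?S"
      using card_mono[of ?S "{..k}"] by simp
  next
    assume "k < card ?S"
    show "P (xs ! k)"
    proof (rule ccontr)
      assume "\<not> P (xs ! k)"
      then have "\<not> P (xs ! i)" if "k \<le> i" "i < length xs" for i
        using down sorted_nth_mono[OF sorted that] by blast
      then have "?S \<subseteq> {..<k}"
        using not_less by blast
      then show False
        using \<open>k < card ?S\<close> card_mono[of "{..<k}" ?S] by simp
    qed
  qed
  then show ?thesis by (simp add: length_filter_conv_card)
qed

lemma length_filter_map_upt:
  "length (filter P (map z [1..<D+1])) = card {t\<in>{1..D}. P (z t)}"
proof -
  have "length (filter P (map z [1..<D+1])) = length (filter (\<lambda>t. P (z t)) [1..<D+1])"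
    by (simp add: filter_map comp_def)
  also have "\<dots> = card {t\<in>{1..D}. P (z t)}"
    by (subst distinct_card[symmetric]) (auto intro: arg_cong[where f = card])
  finally show ?thesis .
qed

lemma order_stat_eq_iff:
  assumes "1 \<le> r" "r \<le> D"
  shows "order_stat r D z = Y \<longleftrightarrow>
    card {t\<in>{1..D}. z t < Y} < r \<and> card {t\<in>{1..D}. Y < z t} \<le> D - r"
proof -
  define s where "s = sort (map z [1..<D+1])"
  have sorted: "sorted s" and len: "length s = D" by (simp_all add: s_def)
  have k: "r - 1 < length s" using assms len by simp
  have count: "length (filter P s) = card {t\<in>{1..D}. P (z t)}" for P
    unfolding s_def filter_sort length_sort length_filter_map_upt ..
  have below: "s ! (r - 1) < Y \<longleftrightarrow> r - 1 < card {t\<in>{1..D}. z t < Y}"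
    using sorted_nth_iff_less_length_filter[OF sorted k, of "\<lambda>x. x < Y"] count by simp
  have at_most: "s ! (r - 1) \<le> Y \<longleftrightarrow> r - 1 < D - card {t\<in>{1..D}. Y < z t}"
    using sorted_nth_iff_less_length_filter[OF sorted k, of "\<lambda>x. x \<le> Y"]
      sum_length_filter_compl[of "\<lambda>x. x \<le> Y" s] count len by (simp add: not_le) linarith
  have "order_stat r D z = Y \<longleftrightarrow> \<not> s ! (r - 1) < Y \<and> s ! (r - 1) \<le> Y"
    by (auto simp: order_stat_def s_def)
  with below at_most assms show ?thesis by linarith
qed

lemma cmp_of_eq_iff: "cmp_of Y x = k \<longleftrightarrow> x \<in> cmp_set Y k"
  by (cases k) (auto simp: cmp_of_def cmp_set_def)

lemma count_cmp_sum: "count_cmp d c LtY + count_cmp d c EqY + count_cmp d c GtY = d"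
proof -
  let ?A = "\<lambda>k. {t\<in>{1..d}. c t = k}"
  have partition: "{1..d} = ?A LtY \<union> ?A EqY \<union> ?A GtY"
  proof (rule set_eqI)
    show "t \<in> {1..d} \<longleftrightarrow> t \<in> ?A LtY \<union> ?A EqY \<union> ?A GtY" for t
      by (cases "c t") auto
  qed
  have "d = card {1..d}" by simp
  also have "\<dots> = card (?A LtY \<union> ?A EqY \<union> ?A GtY)"
    using partition by (rule arg_cong)
  also have "\<dots> = card (?A LtY \<union> ?A EqY) + card (?A GtY)"
    by (rule card_Un_disjoint) auto
  also have "card (?A LtY \<union> ?A EqY) = card (?A LtY) + card (?A EqY)"
    by (rule card_Un_disjoint) auto
  finally show ?thesis
    unfolding count_cmp_def by linarith
qed

lemma card_prefix_tail:
  assumes "d \<le> D" and "\<forall>t\<in>{1..d}. cmp_of Y (z t) = c t"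
  shows "card {t\<in>{1..D}. cmp_of Y (z t) = k} =
    count_cmp d c k + card {t\<in>{d<..D}. cmp_of Y (z t) = k}"
proof -
  have "{t\<in>{1..D}. cmp_of Y (z t) = k} =
      {t\<in>{1..d}. c t = k} \<union> {t\<in>{d<..D}. cmp_of Y (z t) = k}"
    using assms by auto
  then have "card {t\<in>{1..D}. cmp_of Y (z t) = k} =
      card ({t\<in>{1..d}. c t = k} \<union> {t\<in>{d<..D}. cmp_of Y (z t) = k})"
    by (rule arg_cong)
  also have "\<dots> = count_cmp d c k + card {t\<in>{d<..D}. cmp_of Y (z t) = k}"
    unfolding count_cmp_def by (rule card_Un_disjoint) auto
  finally show ?thesis .
qed

lemma card_tail_le: "card {t\<in>{d<..D}. P t} \<le> D - d"
proof -
  have "card {t\<in>{d<..D}. P t} \<le> card {d<..D}"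
    by (rule card_mono) auto
  then show ?thesis by simp
qed

lemma order_stat_eq_iff_tail:
  assumes "1 \<le> r" "r \<le> D" "d \<le> D" and prefix: "\<forall>t\<in>{1..d}. cmp_of Y (z t) = c t"
  shows "order_stat r D z = Y \<longleftrightarrow>
    count_cmp d c LtY + card {t\<in>{d<..D}. z t < Y} < r \<and>
    count_cmp d c GtY + card {t\<in>{d<..D}. Y < z t} \<le> D - r"
proof -
  have lt: "{t\<in>S. z t < Y} = {t\<in>S. cmp_of Y (z t) = LtY}"
    and gt: "{t\<in>S. Y < z t} = {t\<in>S. cmp_of Y (z t) = GtY}" for S
    by (auto simp: cmp_of_def)
  show ?thesis
    unfolding order_stat_eq_iff[OF assms(1,2)] lt gt card_prefix_tail[OF assms(3) prefix] ..
qed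

lemma order_stat_eq_iff_tail_ge:
  assumes "1 \<le> r" "r \<le> D" "d \<le> D" and "\<forall>t\<in>{1..d}. cmp_of Y (z t) = c t"
    and "1 \<le> count_cmp d c EqY" "count_cmp d c LtY = r - 1"
  shows "order_stat r D z = Y \<longleftrightarrow> (\<forall>t\<in>{d<..D}. z t \<in> {Y..})"
proof -
  have "count_cmp d c GtY + card {t\<in>{d<..D}. Y < z t} \<le> D - r"
    using card_tail_le[of d D "\<lambda>t. Y < z t"] count_cmp_sum[of d c] assms by linarith
  moreover have "count_cmp d c LtY + card {t\<in>{d<..D}. z t < Y} < r \<longleftrightarrow>
      card {t\<in>{d<..D}. z t < Y} = 0"
    using assms by linarith
  moreover have "card {t\<in>{d<..D}. z t < Y} = 0 \<longleftrightarrow> (\<forall>t\<in>{d<..D}. z t \<in> {Y..})"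
    by (auto simp: card_eq_0_iff not_less)
  ultimately show ?thesis
    using order_stat_eq_iff_tail[OF assms(1-4)] by argo
qed

lemma order_stat_eq_iff_tail_le:
  assumes "1 \<le> r" "r \<le> D" "d \<le> D" and "\<forall>t\<in>{1..d}. cmp_of Y (z t) = c t"
    and "1 \<le> count_cmp d c EqY" "count_cmp d c GtY = D - r"
  shows "order_stat r D z = Y \<longleftrightarrow> (\<forall>t\<in>{d<..D}. z t \<in> {..Y})"
proof -
  have "count_cmp d c LtY + card {t\<in>{d<..D}. z t < Y} < r"
    using card_tail_le[of d D "\<lambda>t. z t < Y"] count_cmp_sum[of d c] assms by linarith
  moreover have "count_cmp d c GtY + card {t\<in>{d<..D}. Y < z t} \<le> D - r \<longleftrightarrow>
      card {t\<in>{d<..D}. Y < z t} = 0"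
    using assms by linarith
  moreover have "card {t\<in>{d<..D}. Y < z t} = 0 \<longleftrightarrow> (\<forall>t\<in>{d<..D}. z t \<in> {..Y})"
    by (auto simp: card_eq_0_iff not_less)
  ultimately show ?thesis
    using order_stat_eq_iff_tail[OF assms(1-4)] by argo
qed

lemma order_stat_eq_if_prefix:
  assumes "1 \<le> r" "r \<le> D" "d \<le> D" and "\<forall>t\<in>{1..d}. cmp_of Y (z t) = c t"
    and "int (count_cmp d c EqY) =
      max (int r - int (count_cmp d c LtY)) (int D - int r - int (count_cmp d c GtY) + 1)"
  shows "order_stat r D z = Y"
proof -
  have "count_cmp d c LtY + card {t\<in>{d<..D}. z t < Y} < r"
    using card_tail_le[of d D "\<lambda>t. z t < Y"] count_cmp_sum[of d c] assms by linarith
  moreover have "count_cmp d c GtY + card {t\<in>{d<..D}. Y < z t} \<le> D - r"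
    using card_tail_le[of d D "\<lambda>t. Y < z t"] count_cmp_sum[of d c] assms by linarith
  ultimately show ?thesis
    using order_stat_eq_iff_tail[OF assms(1-4)] by blast
qed

lemma cond_iid_pmf_eq_Pi_pmf:
  assumes "d \<le> D" and pos: "measure_pmf.prob (iid_pmf D f) (cond_event r D Y d c) > 0"
    and tail: "\<And>z. \<forall>t\<in>{1..d}. cmp_of Y (z t) = c t \<Longrightarrow>
      order_stat r D z = Y \<longleftrightarrow> (\<forall>t\<in>{d<..D}. z t \<in> B)"
  shows "cond_pmf (iid_pmf D f) (cond_event r D Y d c) =
    Pi_pmf {1..D} 0 (\<lambda>t. if t \<le> d then trunc_pmf (cmp_set Y (c t)) f else trunc_pmf B f)"
proof -
  define A where "A t = (if t \<le> d then cmp_set Y (c t) else B)" for t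
  have box: "cond_event r D Y d c = Pi {1..D} A"
  proof (rule set_eqI)
    fix z
    have "z \<in> Pi {1..D} A \<longleftrightarrow>
        (\<forall>t\<in>{1..d}. cmp_of Y (z t) = c t) \<and> (\<forall>t\<in>{d<..D}. z t \<in> B)"
      using \<open>d \<le> D\<close> by (auto simp: A_def cmp_of_eq_iff Pi_iff)
    then show "z \<in> cond_event r D Y d c \<longleftrightarrow> z \<in> Pi {1..D} A"
      using tail by (auto simp: cond_event_def)
  qed
  have "cond_pmf (iid_pmf D f) (cond_event r D Y d c) =
      Pi_pmf {1..D} 0 (\<lambda>t. cond_pmf f (A t))"
    using pos unfolding box iid_pmf_def by (intro cond_Pi_pmf_Pi) auto
  also have "\<dots> =
      Pi_pmf {1..D} 0 (\<lambda>t. if t \<le> d then trunc_pmf (cmp_set Y (c t)) f else trunc_pmf B f)"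
    unfolding A_def trunc_pmf_def by (simp add: if_distrib)
  finally show ?thesis .
qed

lemma trunc_pmf_UNIV: "trunc_pmf UNIV f = f"
  by (rule pmf_eqI) (simp add: trunc_pmf_def pmf_cond set_pmf_not_empty)

theorem theorem5p3:
  fixes f :: "int pmf" and r D d :: nat and Y :: int and c :: "nat \<Rightarrow> cmp"
  assumes "1 \<le> r" and "r \<le> D" and "1 \<le> d" and "d < D"
    and pos: "measure_pmf.prob (iid_pmf D f) (cond_event r D Y d c) > 0"
  defines "Nlt \<equiv> count_cmp d c LtY" and "Neq \<equiv> count_cmp d c EqY"
    and "Ngt \<equiv> count_cmp d c GtY"
  shows
    "(Neq \<ge> 1 \<and> Nlt = r - 1 \<longrightarrow>
        cond_pmf (iid_pmf D f) (cond_event r D Y d c) =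
        Pi_pmf {1..D} 0 (\<lambda>t. if t \<le> d then trunc_pmf (cmp_set Y (c t)) f
                               else trunc_pmf {Y..} f))
   \<and> (Neq \<ge> 1 \<and> Ngt = D - r \<longrightarrow>
        cond_pmf (iid_pmf D f) (cond_event r D Y d c) =
        Pi_pmf {1..D} 0 (\<lambda>t. if t \<le> d then trunc_pmf (cmp_set Y (c t)) f
                               else trunc_pmf {..Y} f))
   \<and> (int Neq = max (int r - int Nlt) (int D - int r - int Ngt + 1) \<longrightarrow>
        cond_pmf (iid_pmf D f) (cond_event r D Y d c) =
        Pi_pmf {1..D} 0 (\<lambda>t. if t \<le> d then trunc_pmf (cmp_set Y (c t)) f
                               else f))"
proof -
  have "d \<le> D" using \<open>d < D\<close> by simp
  note cond_law = cond_iid_pmf_eq_Pi_pmf[OF \<open>d \<le> D\<close> pos]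
  note bounds = \<open>1 \<le> r\<close> \<open>r \<le> D\<close> \<open>d \<le> D\<close>
  show ?thesis
    unfolding Nlt_def Neq_def Ngt_def
    apply (intro conjI impI)
    subgoal by (intro cond_law order_stat_eq_iff_tail_ge[OF bounds, where c = c]) auto
    subgoal by (intro cond_law order_stat_eq_iff_tail_le[OF bounds, where c = c]) auto
    subgoal using cond_law[where B = UNIV]
      by (simp add: order_stat_eq_if_prefix[OF bounds, where c = c] trunc_pmf_UNIV cong: if_cong)
    done
qed

end
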